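(* There exists a joint distribution $\mathbf{p}$ of random variables $(Y,\mathbf{B},A,Z^* )$, with $Y\in\{0,1\}$, $A\in\{0,1\}$, $\mathbf{B}$ taking values in $\mathcal{X}^b\subseteq\mathbb{R}^n$, and $Z^*=Z$ if $A=1$ and $Z^*=\texttt{N/A}$ if $A=0$ (where $Z$ is real-valued), such that the model $$f_{\text{csp}}(\mathbf{b},a,z^* )=\begin{cases}\mathbb{E}[Y\mid \mathbf{B}=\mathbf{b},A=1] & \text{if } a=0,\\ \mathbb{E}[Y\mid \mathbf{B}=\mathbf{b},A=1,Z^*=z^*] & \text{if } a=1\end{cases}$$ has strictly larger expected squared loss than the base model $f^*_{\text{base}}(\mathbf{b})=\mathbb{E}[Y\mid \mathbf{B}=\mathbf{b}]$, i.e. $$\mathbb{E}\big[(Y-f^*_{\text{base}}(\mathbf{B}))^2\big]<\mathbb{E}\big[(Y-f_{\text{csp}}(\mathbf{B},A,Z^* ))^2\big].$$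
   Context: Setting: each individual has base features $\mathbf{b}\in\mathcal{X}^b\subseteq\mathbb{R}^n$, an optional real-valued feature $z$, an availability indicator $a\in\{0,1\}$ (whether $z$ was disclosed), and observed imputed value $z^*=z$ if $a=1$ and $z^*=\texttt{N/A}$ if $a=0$; the label is $Y$. $f_{\text{csp}}$ is the model obtained by imposing conditional statistical parity $\mathbb{E}[\hat Y\mid \mathbf{B}=\mathbf{b},A=0]=\mathbb{E}[\hat Y\mid \mathbf{B}=\mathbf{b},A=1]$ together with predicting the conditional mean given all information when $a=1$. *)

theory Defs
  imports "HOL-Probability.Probability"
begin

text \<open>An outcome is a tuple (Y, B, A, Z*): label Y, base features B in R^n,
  availability indicator A, imputed value Z* (None encodes N/A).\<close>

type_synonym 'n outcome = "real \<times> (real ^ 'n) \<times> nat \<times> real option"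

definition oY :: "'n outcome \<Rightarrow> real" where "oY \<omega> = fst \<omega>"
definition oB :: "'n outcome \<Rightarrow> real ^ 'n" where "oB \<omega> = fst (snd \<omega>)"
definition oA :: "'n outcome \<Rightarrow> nat" where "oA \<omega> = fst (snd (snd \<omega>))"
definition oZ :: "'n outcome \<Rightarrow> real option" where "oZ \<omega> = snd (snd (snd \<omega>))"

definition cexp :: "'a pmf \<Rightarrow> ('a \<Rightarrow> real) \<Rightarrow> ('a \<Rightarrow> bool) \<Rightarrow> real" where
  "cexp p f P = measure_pmf.expectation p (\<lambda>\<omega>. if P \<omega> then f \<omega> else 0)
                / measure_pmf.prob p {\<omega>. P \<omega>}"

definition valid_joint :: "'n outcome pmf \<Rightarrow> bool" where
  "valid_joint p \<longleftrightarrow> (\<forall>\<omega>\<in>set_pmf p.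
      oY \<omega> \<in> {0, 1} \<and> oA \<omega> \<in> {0, 1} \<and> (oA \<omega> = 0 \<longleftrightarrow> oZ \<omega> = None))"

definition f_base :: "'n outcome pmf \<Rightarrow> real ^ 'n \<Rightarrow> real" where
  "f_base p b = cexp p oY (\<lambda>\<omega>. oB \<omega> = b)"

definition f_csp :: "'n outcome pmf \<Rightarrow> real ^ 'n \<Rightarrow> nat \<Rightarrow> real option \<Rightarrow> real" where
  "f_csp p b a z = (if a = 0 then cexp p oY (\<lambda>\<omega>. oB \<omega> = b \<and> oA \<omega> = 1)
                    else cexp p oY (\<lambda>\<omega>. oB \<omega> = b \<and> oA \<omega> = 1 \<and> oZ \<omega> = z))"

end

theory Submission
  imports Defs
begin

text \<open>Take two individuals with the same base features: one withholds Z and has Y = 1, the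
  other discloses Z and has Y = 0. Conditional statistical parity forces the model to predict
  for the first one the mean label of the disclosing group, namely 0, so each individual is
  charged the loss 1 with probability 1/2 and the expected loss is 1/2. The base model
  predicts the overall mean 1/2 and has expected loss 1/4.\<close>

lemma cexp_pmf_of_set:
  assumes "finite S" "S \<noteq> {}"
  shows "cexp (pmf_of_set S) f P = (\<Sum>x\<in>S \<inter> {x. P x}. f x) / card (S \<inter> {x. P x})"
proof -
  have "(\<Sum>x\<in>S. if P x then f x else 0) = (\<Sum>x\<in>S \<inter> {x. P x}. f x)"
    using assms(1) by (simp add: sum.inter_restrict)
  moreover have "card S > 0"
    using assms by (simp add: card_gt_0_iff)
  ultimately show ?thesis
    using assms by (simp add: cexp_def integral_pmf_of_set measure_pmf_of_set)
qed

lemma expectation_pmf_of_two_points: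
  fixes f :: "'a \<Rightarrow> real"
  assumes "x \<noteq> y"
  shows "measure_pmf.expectation (pmf_of_set {x, y}) f = (f x + f y) / 2"
  using assms by (simp add: integral_pmf_of_set)

lemma prob_pmf_of_two_points_pos:
  assumes "x \<in> A \<or> y \<in> A"
  shows "measure_pmf.prob (pmf_of_set {x, y}) A > 0"
  using assms by (auto simp: measure_pmf_of_set card_gt_0_iff)

definition withholder :: "'n::finite outcome" where "withholder = (1, 0, 0, None)"
definition discloser :: "'n::finite outcome" where "discloser = (0, 0, 1, Some 0)"

definition csp_counterexample :: "'n::finite outcome pmf" where
  "csp_counterexample = pmf_of_set {withholder, discloser}"

lemma withholder_ne_discloser: "withholder \<noteq> discloser"
  by (simp add: withholder_def discloser_def)

lemmas counterexample_defs =
  withholder_def discloser_def oY_def oB_def oA_def oZ_def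

lemma counterexample_features:
  "oB withholder = 0" "oB discloser = 0" "oA withholder = 0" "oA discloser = 1"
  "oY withholder = 1" "oY discloser = 0" "oZ discloser = Some 0"
  by (simp_all add: counterexample_defs)

lemma set_pmf_csp_counterexample: "set_pmf csp_counterexample = {withholder, discloser}"
  by (simp add: csp_counterexample_def)

lemma expectation_csp_counterexample:
  fixes f :: "'n::finite outcome \<Rightarrow> real"
  shows "measure_pmf.expectation csp_counterexample f = (f withholder + f discloser) / 2"
  by (simp add: csp_counterexample_def expectation_pmf_of_two_points withholder_ne_discloser)

lemma valid_joint_csp_counterexample: "valid_joint csp_counterexample"
  by (auto simp: valid_joint_def set_pmf_csp_counterexample counterexample_defs)

lemma csp_counterexample_disclosure_positive:
  "\<forall>\<omega>\<in>set_pmf csp_counterexample.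
     measure_pmf.prob csp_counterexample {\<omega>'. oB \<omega>' = oB \<omega> \<and> oA \<omega>' = 1} > 0"
  unfolding set_pmf_csp_counterexample csp_counterexample_def
  by (auto intro!: prob_pmf_of_two_points_pos simp: counterexample_defs)

lemma f_base_csp_counterexample: "f_base csp_counterexample 0 = 1 / 2"
proof -
  have "{withholder, discloser} \<inter> {\<omega>. oB \<omega> = 0} = {withholder :: 'n::finite outcome, discloser}"
    by (auto simp: counterexample_defs)
  then show ?thesis
    using withholder_ne_discloser
    by (simp add: f_base_def csp_counterexample_def cexp_pmf_of_set counterexample_defs)
qed

lemma f_csp_csp_counterexample:
  "f_csp csp_counterexample 0 a z = 0" if "a = 0 \<or> z = Some 0"
proof -
  have "{withholder, discloser} \<inter> {\<omega>. oB \<omega> = 0 \<and> oA \<omega> = 1 \<and> (a = 0 \<or> oZ \<omega> = z)}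
        = {discloser :: 'n::finite outcome}"
    using that by (auto simp: counterexample_defs)
  then show ?thesis
    by (auto simp: f_csp_def csp_counterexample_def cexp_pmf_of_set counterexample_defs)
qed

theorem lemma3p1:
  shows "\<exists>p :: 'n::finite outcome pmf.
    valid_joint p \<and>
    (\<forall>\<omega>\<in>set_pmf p. measure_pmf.prob p {\<omega>'. oB \<omega>' = oB \<omega> \<and> oA \<omega>' = 1} > 0) \<and>
    measure_pmf.expectation p (\<lambda>\<omega>. (oY \<omega> - f_base p (oB \<omega>))\<^sup>2)
      < measure_pmf.expectation p (\<lambda>\<omega>. (oY \<omega> - f_csp p (oB \<omega>) (oA \<omega>) (oZ \<omega>))\<^sup>2)"
proof (intro exI conjI)
  let ?p = "csp_counterexample :: 'n::finite outcome pmf"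
  have "measure_pmf.expectation ?p (\<lambda>\<omega>. (oY \<omega> - f_base ?p (oB \<omega>))\<^sup>2) = 1 / 4"
    by (simp add: expectation_csp_counterexample counterexample_features
        f_base_csp_counterexample power2_eq_square)
  moreover have "measure_pmf.expectation ?p
      (\<lambda>\<omega>. (oY \<omega> - f_csp ?p (oB \<omega>) (oA \<omega>) (oZ \<omega>))\<^sup>2) = 1 / 2"
    by (simp add: expectation_csp_counterexample counterexample_features
        f_csp_csp_counterexample del: One_nat_def)
  ultimately show "measure_pmf.expectation ?p (\<lambda>\<omega>. (oY \<omega> - f_base ?p (oB \<omega>))\<^sup>2)
      < measure_pmf.expectation ?p (\<lambda>\<omega>. (oY \<omega> - f_csp ?p (oB \<omega>) (oA \<omega>) (oZ \<omega>))\<^sup>2)"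
    by simp
qed (fact valid_joint_csp_counterexample csp_counterexample_disclosure_positive)+

end
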